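(* Let $\ell>r\ge 2$ be integers. The function $f$ defined on integers $k\ge r$ by \[ f(k)=\frac{(k-1)(k-2)\cdots(k-r+1)}{k^{\ell-1}} \] is unimodal and attains its maximum at a unique integer $m_{r,\ell}\ge r$.
   Context: A function $h:I\to\mathbb{R}$ on $I\subseteq\mathbb{R}$ is unimodal if there is $x_0\in I$ such that $h$ is non-decreasing on $I\cap(-\infty,x_0]$ and non-increasing on $I\cap(x_0,\infty)$. *)

theory Defs
  imports Complex_Main
begin

definition unimodal_on :: "'a::linorder set \<Rightarrow> ('a \<Rightarrow> real) \<Rightarrow> bool" where
  "unimodal_on I h \<longleftrightarrow>
     (\<exists>x0\<in>I. (\<forall>x\<in>I. \<forall>y\<in>I. x \<le> y \<and> y \<le> x0 \<longrightarrow> h x \<le> h y) \<and>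
              (\<forall>x\<in>I. \<forall>y\<in>I. x0 < x \<and> x \<le> y \<longrightarrow> h y \<le> h x))"

definition f_rl :: "nat \<Rightarrow> nat \<Rightarrow> int \<Rightarrow> real" where
  "f_rl r l k = (\<Prod>i\<in>{1..r-1}. (of_int k - of_nat i)) / (of_int k) ^ (l - 1)"

end

theory Submission
  imports Defs "HOL-Analysis.Analysis"
begin

text \<open>Write c = r - 1 and n = l - 1. Since f(k+1)/f(k) = k^(n+1) / ((k - c)(k + 1)^n), f rises at k
  exactly when (1 - c t)(1 + t)^n < 1 for t = 1/k, and it never stays level because k + 1 does not
  divide k^(n+1). The function t \<mapsto> ln ((1 - c t)(1 + t)^n) is concave and vanishes at t = 0, so
  once it is positive it stays positive for all smaller t > 0: the ascents of f form an initial
  segment of {r, r+1, ...}. Bernoulli's inequality shows that f descends at k = c n + 1, so this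
  segment is finite, and the point where it ends is the unique maximiser.\<close>

lemma int_steps_less:
  fixes h :: "int \<Rightarrow> 'a::preorder"
  assumes "x < y" and "\<And>k. x \<le> k \<Longrightarrow> k < y \<Longrightarrow> h k < h (k + 1)"
  shows "h x < h y"
  using assms
proof (induction y rule: int_gr_induct)
  case base
  then show ?case by simp
next
  case (step i)
  then have "h x < h i"
    by simp
  also have "h i < h (i + 1)"
    using step by simp
  finally show ?case .
qed

lemma rise_then_fall_int:
  fixes h :: "int \<Rightarrow> real"
  assumes "a \<le> m"
    and rise: "\<And>k. a \<le> k \<Longrightarrow> k < m \<Longrightarrow> h k < h (k + 1)"
    and fall: "\<And>k. m \<le> k \<Longrightarrow> h (k + 1) < h k"
  shows "unimodal_on {k. a \<le> k} h" and "\<exists>!m. a \<le> m \<and> (\<forall>k. a \<le> k \<longrightarrow> h k \<le> h m)"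
proof -
  have inc: "h x \<le> h y" if "a \<le> x" "x \<le> y" "y \<le> m" for x y
    using that rise int_steps_less[of x y h] by (cases "x = y") auto
  have dec: "h y \<le> h x" if "m \<le> x" "x \<le> y" for x y
    using that fall int_steps_less[of x y "\<lambda>k. - h k"] by (cases "x = y") auto
  have max: "h k < h m" if "a \<le> k" "k \<noteq> m" for k
  proof (cases "k < m")
    case True
    then show ?thesis
      using that rise int_steps_less[of k m h] by auto
  next
    case False
    then show ?thesis
      using that fall int_steps_less[of m k "\<lambda>k. - h k"] by auto
  qed
  show "unimodal_on {k. a \<le> k} h"
    unfolding unimodal_on_def using \<open>a \<le> m\<close> inc dec by (intro bexI[of _ m]) auto
  show "\<exists>!m. a \<le> m \<and> (\<forall>k. a \<le> k \<longrightarrow> h k \<le> h m)"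
    using \<open>a \<le> m\<close> max by (intro ex1I[of _ m]) (auto intro: less_imp_le, meson not_le)
qed

lemma downward_closed_int_threshold:
  fixes P :: "int \<Rightarrow> bool"
  assumes closed: "\<And>k. a \<le> k \<Longrightarrow> P (k + 1) \<Longrightarrow> P k" and "a \<le> K" "\<not> P K"
  obtains m where "a \<le> m" "\<And>k. a \<le> k \<Longrightarrow> k < m \<Longrightarrow> P k" "\<And>k. m \<le> k \<Longrightarrow> \<not> P k"
proof
  define d where "d = (LEAST t::nat. \<not> P (a + int t))"
  show "a \<le> a + int d"
    by simp
  show "P k" if "a \<le> k" "k < a + int d" for k
    using not_less_Least[of "nat (k - a)" "\<lambda>t. \<not> P (a + int t)"] that by (simp add: d_def)
  have "\<not> P (a + int d)"
    unfolding d_def by (rule LeastI[of _ "nat (K - a)"]) (use assms in simp)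
  then show "\<not> P k" if "a + int d \<le> k" for k
  proof (rule int_ge_induct[OF that])
    show "\<not> P (i + 1)" if "a + int d \<le> i" "\<not> P i" for i
    proof -
      have "a \<le> i"
        using that(1) by linarith
      then show ?thesis
        using closed[of i] that(2) by blast
    qed
  qed
qed

lemma unimodal_if_ascents_downward_closed:
  fixes h :: "int \<Rightarrow> real"
  assumes no_tie: "\<And>k. a \<le> k \<Longrightarrow> h (k + 1) \<noteq> h k"
    and closed: "\<And>k. a \<le> k \<Longrightarrow> h (k + 1) < h (k + 2) \<Longrightarrow> h k < h (k + 1)"
    and "a \<le> K" "h (K + 1) < h K"
  shows "unimodal_on {k. a \<le> k} h \<and> (\<exists>!m. a \<le> m \<and> (\<forall>k. a \<le> k \<longrightarrow> h k \<le> h m))"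
proof -
  obtain m where "a \<le> m" and rise: "\<And>k. a \<le> k \<Longrightarrow> k < m \<Longrightarrow> h k < h (k + 1)"
    and no_rise: "\<And>k. m \<le> k \<Longrightarrow> \<not> h k < h (k + 1)"
    by (rule downward_closed_int_threshold[of a "\<lambda>k. h k < h (k + 1)" K])
      (use closed assms(3,4) in \<open>auto simp: add.assoc\<close>)
  have fall: "h (k + 1) < h k" if "m \<le> k" for k
    using no_rise[OF that] no_tie[of k] \<open>a \<le> m\<close> that by auto
  show ?thesis
    using rise_then_fall_int[of a m h, OF \<open>a \<le> m\<close> rise fall] by blast
qed

lemma ln_chord_through_one:
  fixes s a b :: real
  assumes "0 < a" "a \<le> b" "0 < 1 + s * b"
  shows "a / b * ln (1 + s * b) \<le> ln (1 + s * a)"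
proof -
  have "(1 - a/b) * ln 1 + a/b * ln (1 + s * b) \<le> ln ((1 - a/b) *\<^sub>R 1 + (a/b) *\<^sub>R (1 + s * b))"
    using assms by (intro concave_onD[OF ln_concave]) auto
  also have "(1 - a/b) *\<^sub>R 1 + (a/b) *\<^sub>R (1 + s * b) = 1 + s * a"
    using assms by (simp add: field_simps)
  finally show ?thesis by simp
qed

lemma one_less_mult_power_downward:
  fixes c a b :: real
  assumes gt: "1 < (1 - c * b) * (1 + b) ^ n" and "0 < a" "a \<le> b" "c * b < 1"
  shows "1 < (1 - c * a) * (1 + a) ^ n"
proof -
  have "c * a < 1"
  proof (cases "0 \<le> c")
    case True
    then show ?thesis using assms mult_left_mono[of a b c] by linarith
  next
    case False
    then show ?thesis using mult_neg_pos[of c a] \<open>0 < a\<close> by linarith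
  qed
  then have pos: "0 < 1 - c * b" "0 < 1 - c * a"
    using assms by auto
  have "0 < ln ((1 - c * b) * (1 + b) ^ n)"
    using gt by simp
  \<comment> \<open>both logarithms in the shape ln (1 + s * t) needed by ln_chord_through_one\<close>
  also have "\<dots> = ln (1 + (-c) * b) + n * ln (1 + 1 * b)"
    using pos assms by (simp add: ln_mult ln_realpow)
  finally have "0 < a / b * (ln (1 + (-c) * b) + n * ln (1 + 1 * b))"
    using assms by simp
  also have "\<dots> = a / b * ln (1 + (-c) * b) + n * (a / b * ln (1 + 1 * b))"
    by (simp add: algebra_simps)
  also have "\<dots> \<le> ln (1 + (-c) * a) + n * ln (1 + 1 * a)"
    using assms pos by (intro add_mono mult_left_mono ln_chord_through_one) auto
  also have "\<dots> = ln ((1 - c * a) * (1 + a) ^ n)"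
    using pos assms by (simp add: ln_mult ln_realpow)
  finally show ?thesis
    using pos assms by simp
qed

lemma sub_mult_power_le_power_downward:
  fixes c x y :: real
  assumes "(x - c) * (x + 1) ^ n \<le> x ^ (n + 1)" and "0 < y" "c < y" "y \<le> x"
  shows "(y - c) * (y + 1) ^ n \<le> y ^ (n + 1)"
proof (rule ccontr)
  have scaled: "(1 - c * (1 / z)) * (1 + 1 / z) ^ n = (z - c) * (z + 1) ^ n / z ^ (n + 1)"
    if "0 < z" for z :: real
    using that by (simp add: field_simps power_divide)
  assume "\<not> ?thesis"
  then have gt: "1 < (1 - c * (1 / y)) * (1 + 1 / y) ^ n"
    unfolding scaled[OF \<open>0 < y\<close>] using \<open>0 < y\<close> by (simp only: less_divide_eq_1_pos zero_less_power not_le)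
  from gt have "1 < (1 - c * (1 / x)) * (1 + 1 / x) ^ n"
  proof (rule one_less_mult_power_downward)
    show "0 < 1 / x" "1 / x \<le> 1 / y"
      using assms by (auto intro: frac_le)
    show "c * (1 / y) < 1"
      using assms by simp
  qed
  then show False
    unfolding scaled[OF order.strict_trans2[OF \<open>0 < y\<close> \<open>y \<le> x\<close>]]
    using assms by (simp only: less_divide_eq_1_pos zero_less_power not_le)
qed

lemma sub_mult_power_le_power_downward_int:
  fixes c x y :: int
  assumes le: "(x - c) * (x + 1) ^ n \<le> x ^ (n + 1)" and "0 < y" "c < y" "y \<le> x"
  shows "(y - c) * (y + 1) ^ n \<le> y ^ (n + 1)"
proof -
  have "real_of_int ((x - c) * (x + 1) ^ n) \<le> real_of_int (x ^ (n + 1))"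
    using le by (simp only: of_int_le_iff)
  then have "real_of_int ((y - c) * (y + 1) ^ n) \<le> real_of_int (y ^ (n + 1))"
    using sub_mult_power_le_power_downward[where x = "of_int x" and y = "of_int y" and c = "of_int c"] assms
    by simp
  then show ?thesis
    by (simp only: of_int_le_iff)
qed

lemma power_less_sub_mult_power:
  fixes c K :: real
  assumes "c * n < (n - c) * K" "0 \<le> c" "c < K"
  shows "K ^ (n + 1) < (K - c) * (K + 1) ^ n"
proof -
  have "K > 0" using assms by linarith
  then have "0 < 1 / K" by simp
  then have "-1 \<le> 1 / K" by linarith
  have "K ^ n * (K + n) = K ^ (n + 1) * (1 + n * (1 / K))"
    using \<open>K > 0\<close> by (simp add: field_simps)
  also have "\<dots> \<le> K ^ (n + 1) * (1 + 1 / K) ^ n"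
    using \<open>K > 0\<close> by (intro mult_left_mono Bernoulli_inequality \<open>-1 \<le> 1 / K\<close>) auto
  also have "\<dots> = K * (K + 1) ^ n"
    using \<open>K > 0\<close> by (simp add: field_simps power_divide)
  finally have bernoulli: "K ^ n * (K + n) \<le> K * (K + 1) ^ n" .
  have "K * K ^ (n + 1) = K ^ n * (K * K)" by (simp add: algebra_simps)
  also have "\<dots> < K ^ n * ((K - c) * (K + n))"
    using assms \<open>K > 0\<close> by (intro mult_strict_left_mono) (auto simp: algebra_simps)
  also have "\<dots> \<le> (K - c) * (K * (K + 1) ^ n)"
    using bernoulli assms by (simp add: mult_left_mono mult.left_commute)
  finally show ?thesis
    using \<open>K > 0\<close> by (simp add: mult.left_commute)
qed

lemma prod_minus_shift:
  fixes x :: "'a::comm_ring_1"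
  shows "(\<Prod>i=1..m. x + 1 - of_nat i) * (x - of_nat m) = x * (\<Prod>i=1..m. x - of_nat i)"
proof (induction m)
  case (Suc m)
  then show ?case
    by (simp add: prod.nat_ivl_Suc' algebra_simps)
qed simp

lemma not_add_one_dvd_power:
  fixes k :: int
  assumes "0 < k"
  shows "\<not> (k + 1) dvd k ^ n"
proof
  assume "(k + 1) dvd k ^ n"
  moreover have "coprime (k + 1) (k ^ n)"
    by simp
  ultimately have "is_unit (k + 1)"
    using coprime_absorb_left by blast
  then show False
    using assms by simp
qed

lemma f_rl_pos:
  assumes "1 \<le> r" "int r \<le> k"
  shows "0 < f_rl r l k"
  using assms unfolding f_rl_def by (intro divide_pos_pos prod_pos) auto

lemma f_rl_Suc:
  assumes "1 \<le> r" "1 \<le> l" "0 < k"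
  shows "of_int ((k - (int r - 1)) * (k + 1) ^ (l - 1)) * f_rl r l (k + 1) = of_int (k ^ l) * f_rl r l k"
proof -
  define x where "x = real_of_int k"
  have "x > 0" "l = Suc (l - 1)"
    using assms by (auto simp: x_def)
  have "of_int ((k - (int r - 1)) * (k + 1) ^ (l - 1)) * f_rl r l (k + 1)
      = (\<Prod>i=1..r-1. x + 1 - real i) * (x - real (r - 1))"
    using \<open>x > 0\<close> assms by (simp add: f_rl_def x_def of_nat_diff)
  also have "\<dots> = x * (\<Prod>i=1..r-1. x - real i)"
    by (rule prod_minus_shift)
  also have "\<dots> = x ^ l * ((\<Prod>i=1..r-1. x - real i) / x ^ (l - 1))"
    using \<open>x > 0\<close> by (subst \<open>l = Suc (l - 1)\<close>) simp
  also have "\<dots> = of_int (k ^ l) * f_rl r l k"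
    by (simp add: f_rl_def x_def)
  finally show ?thesis .
qed

lemma f_rl_Suc_compare:
  assumes "1 \<le> r" "1 \<le> l" "int r \<le> k"
  defines "D \<equiv> (k - (int r - 1)) * (k + 1) ^ (l - 1)"
  shows "f_rl r l k < f_rl r l (k + 1) \<longleftrightarrow> D < k ^ l"
    and "f_rl r l (k + 1) < f_rl r l k \<longleftrightarrow> k ^ l < D"
    and "f_rl r l (k + 1) = f_rl r l k \<longleftrightarrow> D = k ^ l"
proof -
  have "0 < D"
    using assms by (simp add: D_def)
  have fk: "0 < f_rl r l k"
    using assms(1,3) by (rule f_rl_pos)
  have ratio: "of_int D * f_rl r l (k + 1) = of_int (k ^ l) * f_rl r l k"
    unfolding D_def using assms by (intro f_rl_Suc) auto
  have "f_rl r l k < f_rl r l (k + 1) \<longleftrightarrow> of_int D * f_rl r l k < of_int D * f_rl r l (k + 1)"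
    using \<open>0 < D\<close> by simp
  also have "\<dots> \<longleftrightarrow> of_int D * f_rl r l k < of_int (k ^ l) * f_rl r l k"
    unfolding ratio ..
  also have "\<dots> \<longleftrightarrow> D < k ^ l"
    using fk by simp
  finally show "f_rl r l k < f_rl r l (k + 1) \<longleftrightarrow> D < k ^ l" .
  have "f_rl r l (k + 1) < f_rl r l k \<longleftrightarrow> of_int D * f_rl r l (k + 1) < of_int D * f_rl r l k"
    using \<open>0 < D\<close> by simp
  also have "\<dots> \<longleftrightarrow> of_int (k ^ l) * f_rl r l k < of_int D * f_rl r l k"
    unfolding ratio ..
  also have "\<dots> \<longleftrightarrow> k ^ l < D"
    using fk by simp
  finally show "f_rl r l (k + 1) < f_rl r l k \<longleftrightarrow> k ^ l < D" .
  have "f_rl r l (k + 1) = f_rl r l k \<longleftrightarrow> of_int D * f_rl r l (k + 1) = of_int D * f_rl r l k"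
    using \<open>0 < D\<close> by simp
  also have "\<dots> \<longleftrightarrow> of_int (k ^ l) * f_rl r l k = of_int D * f_rl r l k"
    unfolding ratio ..
  also have "\<dots> \<longleftrightarrow> D = k ^ l"
    using fk by auto
  finally show "f_rl r l (k + 1) = f_rl r l k \<longleftrightarrow> D = k ^ l" .
qed

lemma f_rl_Suc_neq:
  assumes "1 \<le> r" "2 \<le> l" "int r \<le> k"
  shows "f_rl r l (k + 1) \<noteq> f_rl r l k"
proof
  assume "f_rl r l (k + 1) = f_rl r l k"
  then have "(k - (int r - 1)) * (k + 1) ^ (l - 1) = k ^ l"
    using assms by (subst (asm) f_rl_Suc_compare(3)) auto
  moreover have "(k + 1) dvd (k - (int r - 1)) * (k + 1) ^ (l - 1)"
    using assms by simp
  ultimately show False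
    using not_add_one_dvd_power[of k l] assms by simp
qed

lemma f_rl_ascent_downward:
  assumes "1 \<le> r" "2 \<le> l" "int r \<le> k" "f_rl r l (k + 1) < f_rl r l (k + 2)"
  shows "f_rl r l k < f_rl r l (k + 1)"
proof -
  define n where "n = l - 1"
  have l: "l = n + 1"
    using assms by (simp add: n_def)
  have "(k + 1 - (int r - 1)) * (k + 1 + 1) ^ n \<le> (k + 1) ^ (n + 1)"
    using assms f_rl_Suc_compare(1)[of r l "k + 1"] by (simp add: l add.assoc)
  then have "(k - (int r - 1)) * (k + 1) ^ n \<le> k ^ (n + 1)"
    by (rule sub_mult_power_le_power_downward_int) (use assms in auto)
  moreover have "(k - (int r - 1)) * (k + 1) ^ n \<noteq> k ^ (n + 1)"
    using f_rl_Suc_neq[OF assms(1-3)] f_rl_Suc_compare(3)[of r l k] assms by (simp add: l)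
  ultimately show ?thesis
    using assms by (simp add: f_rl_Suc_compare(1) l)
qed

lemma f_rl_eventually_descends:
  assumes "1 \<le> r" "r < l"
  obtains K where "int r \<le> K" "f_rl r l (K + 1) < f_rl r l K"
proof -
  define n where "n = l - 1"
  have l: "l = n + 1"
    using assms by (simp add: n_def)
  define c where "c = real r - 1"
  define K where "K = (int r - 1) * int n + 1"
  have "r \<le> n" "0 \<le> c"
    using assms by (auto simp: l c_def)
  then have cK: "c * n < of_int K" and "1 \<le> n - c"
    by (auto simp: K_def c_def of_nat_diff)
  have "int r \<le> K"
    using \<open>r \<le> n\<close> \<open>1 \<le> r\<close> mult_left_mono[of 1 "int n" "int r - 1"] by (simp add: K_def)
  then have "real_of_int (int r) \<le> of_int K"
    by (simp only: of_int_le_iff)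
  then have "c < of_int K"
    by (simp add: c_def)
  have "c * n < (n - c) * of_int K"
    using cK \<open>int r \<le> K\<close> mult_right_mono[OF \<open>1 \<le> n - c\<close>, of "of_int K"] by simp
  then have "of_int K ^ (n + 1) < (of_int K - c) * (of_int K + 1) ^ n"
    using \<open>0 \<le> c\<close> \<open>c < of_int K\<close> by (rule power_less_sub_mult_power)
  then have "real_of_int (K ^ l) < real_of_int ((K - (int r - 1)) * (K + 1) ^ (l - 1))"
    by (simp add: l c_def)
  then have "f_rl r l (K + 1) < f_rl r l K"
    using assms \<open>int r \<le> K\<close> by (subst f_rl_Suc_compare(2)) (simp_all only: of_int_less_iff)
  with \<open>int r \<le> K\<close> show ?thesis
    by (rule that)
qed

theorem lemma3p2:
  fixes r l :: nat
  assumes "2 \<le> r" and "r < l"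
  shows "unimodal_on {k::int. k \<ge> int r} (f_rl r l) \<and>
         (\<exists>!m::int. m \<ge> int r \<and> (\<forall>k::int. k \<ge> int r \<longrightarrow> f_rl r l k \<le> f_rl r l m))"
proof -
  have r: "1 \<le> r" and l: "2 \<le> l"
    using assms by auto
  obtain K where "int r \<le> K" "f_rl r l (K + 1) < f_rl r l K"
    using f_rl_eventually_descends r \<open>r < l\<close> by blast
  show ?thesis
  proof (rule unimodal_if_ascents_downward_closed)
    show "f_rl r l (k + 1) \<noteq> f_rl r l k" if "int r \<le> k" for k
      using r l that by (rule f_rl_Suc_neq)
    show "f_rl r l k < f_rl r l (k + 1)" if "int r \<le> k" "f_rl r l (k + 1) < f_rl r l (k + 2)" for k
      using r l that by (rule f_rl_ascent_downward)
  qed fact+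
qed

end
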